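(* Let $\mathcal H$ be a Hilbert space of dimension $d$, let $H(t_i)=\sum_l E^i_l\Pi^i_l$ and $H(t_f)=\sum_k E^f_k\Pi^f_k$ be Hermitian operators on $\mathcal H$ with spectral projectors $\Pi^i_l,\Pi^f_k$, let $\Phi$ be a CPTP map on $\mathcal H$ and $\beta>0$. Let $\gamma_{\beta,i}=e^{-\beta H(t_i)}/\mathcal Z_{\beta,i}$, $\gamma_{\beta,f}=e^{-\beta H(t_f)}/\mathcal Z_{\beta,f}$ with $\mathcal Z_{\beta,i}=\mathrm{Tr}\,e^{-\beta H(t_i)}$, $\mathcal Z_{\beta,f}=\mathrm{Tr}\,e^{-\beta H(t_f)}$, and $\Delta F=-\beta^{-1}\ln(\mathcal Z_{\beta,f}/\mathcal Z_{\beta,i})$. Let $\rho_i$ be a density operator written as $\rho_i=(1-a)\gamma_{\beta,i}+a\tau$, where $a=A_w(\rho_i)$ is the weight of athermality of $\rho_i$ with respect to $\gamma_{\beta,i}$ and $\tau$ the corresponding minimal athermal state. Then the end-point-measurement average satisfies $$\big\langle e^{-\beta(\Delta E-\Delta F)}\big\rangle=\Big\{(1-a)d+a\,\mathrm{Tr}\big(\gamma_{\beta,i}^{-1}\tau\big)\Big\}\Big\{(1-a)\,\mathrm{Tr}\big(\gamma_{\beta,f}\Phi[\gamma_{\beta,i}]\big)+a\,\mathrm{Tr}\big(\gamma_{\beta,f}\Phi[\tau]\big)\Big\}.$$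
   Context: End-point-measurement (EPM) statistics: for an initial state $\rho_i$, the joint distribution is $p^{l,k}=\mathrm{Tr}(\rho_i\Pi^i_l)\,\mathrm{Tr}(\Phi[\rho_i]\Pi^f_k)$, the energy change along $(l,k)$ is $\Delta E_{l,k}=E^f_k-E^i_l$, and for a function $g$, $\langle g(\Delta E)\rangle:=\sum_{l,k}p^{l,k}g(\Delta E_{l,k})$. Weight of athermality: $A_w(\rho)=\min_{\tau\in\mathscr D(\mathcal H)}\{a\ge0:\rho=(1-a)\gamma_{\beta,i}+a\tau\}$, where $\mathscr D(\mathcal H)$ is the set of density operators; the minimal athermal state is the density operator $\tau$ attaining the minimum. *)

theory Defs
  imports Complex_Main "Jordan_Normal_Form.Matrix"
begin

definition mtrace :: "complex mat \<Rightarrow> complex" where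
  "mtrace A = (\<Sum>i<dim_row A. A $$ (i, i))"

definition adj :: "complex mat \<Rightarrow> complex mat" where
  "adj A = mat (dim_col A) (dim_row A) (\<lambda>(i, j). cnj (A $$ (j, i)))"

definition hermitian :: "complex mat \<Rightarrow> bool" where
  "hermitian A \<longleftrightarrow> dim_row A = dim_col A \<and> adj A = A"

definition psd :: "complex mat \<Rightarrow> bool" where
  "psd A \<longleftrightarrow> hermitian A \<and>
     (\<forall>v \<in> carrier_vec (dim_row A).
        0 \<le> Re (\<Sum>i<dim_row A. cnj (v $ i) * (A *\<^sub>v v) $ i))"

definition density :: "nat \<Rightarrow> complex mat \<Rightarrow> bool" where
  "density d \<rho> \<longleftrightarrow> \<rho> \<in> carrier_mat d d \<and> psd \<rho> \<and> mtrace \<rho> = 1"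

definition minv :: "nat \<Rightarrow> complex mat \<Rightarrow> complex mat" where
  "minv d A = (THE B. B \<in> carrier_mat d d \<and> A * B = 1\<^sub>m d \<and> B * A = 1\<^sub>m d)"

definition msum :: "nat \<Rightarrow> (nat \<Rightarrow> complex mat) \<Rightarrow> nat set \<Rightarrow> complex mat" where
  "msum d f I = mat d d (\<lambda>(i, j). \<Sum>l\<in>I. f l $$ (i, j))"

definition spectral_decomp ::
  "nat \<Rightarrow> complex mat \<Rightarrow> nat \<Rightarrow> (nat \<Rightarrow> real) \<Rightarrow> (nat \<Rightarrow> complex mat) \<Rightarrow> bool" where
  "spectral_decomp d H m E P \<longleftrightarrow>
     H \<in> carrier_mat d d \<and> hermitian H \<and>
     (\<forall>l<m. P l \<in> carrier_mat d d \<and> hermitian (P l) \<and> P l * P l = P l \<and> P l \<noteq> 0\<^sub>m d d) \<and>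
     (\<forall>l<m. \<forall>l'<m. l \<noteq> l' \<longrightarrow> P l * P l' = 0\<^sub>m d d \<and> E l \<noteq> E l') \<and>
     msum d P {..<m} = 1\<^sub>m d \<and>
     H = msum d (\<lambda>l. complex_of_real (E l) \<cdot>\<^sub>m P l) {..<m}"

definition exp_spec ::
  "nat \<Rightarrow> real \<Rightarrow> nat \<Rightarrow> (nat \<Rightarrow> real) \<Rightarrow> (nat \<Rightarrow> complex mat) \<Rightarrow> complex mat" where
  "exp_spec d \<beta> m E P = msum d (\<lambda>l. complex_of_real (exp (- \<beta> * E l)) \<cdot>\<^sub>m P l) {..<m}"

definition partition_fn ::
  "nat \<Rightarrow> real \<Rightarrow> nat \<Rightarrow> (nat \<Rightarrow> real) \<Rightarrow> (nat \<Rightarrow> complex mat) \<Rightarrow> complex" where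
  "partition_fn d \<beta> m E P = mtrace (exp_spec d \<beta> m E P)"

definition gibbs ::
  "nat \<Rightarrow> real \<Rightarrow> nat \<Rightarrow> (nat \<Rightarrow> real) \<Rightarrow> (nat \<Rightarrow> complex mat) \<Rightarrow> complex mat" where
  "gibbs d \<beta> m E P = (1 / partition_fn d \<beta> m E P) \<cdot>\<^sub>m exp_spec d \<beta> m E P"

text \<open>(id_n \<otimes> Phi) applied to an (n*d) x (n*d) matrix viewed as an n x n block matrix
  with d x d blocks.\<close>
definition ampl :: "nat \<Rightarrow> nat \<Rightarrow> (complex mat \<Rightarrow> complex mat) \<Rightarrow> complex mat \<Rightarrow> complex mat" where
  "ampl n d \<Phi> M = mat (n * d) (n * d) (\<lambda>(i, j).
      \<Phi> (mat d d (\<lambda>(a, b). M $$ ((i div d) * d + a, (j div d) * d + b))) $$ (i mod d, j mod d))"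

definition cptp :: "nat \<Rightarrow> (complex mat \<Rightarrow> complex mat) \<Rightarrow> bool" where
  "cptp d \<Phi> \<longleftrightarrow>
     (\<forall>X \<in> carrier_mat d d. \<Phi> X \<in> carrier_mat d d) \<and>
     (\<forall>X \<in> carrier_mat d d. \<forall>Y \<in> carrier_mat d d. \<Phi> (X + Y) = \<Phi> X + \<Phi> Y) \<and>
     (\<forall>X \<in> carrier_mat d d. \<forall>c. \<Phi> (c \<cdot>\<^sub>m X) = c \<cdot>\<^sub>m \<Phi> X) \<and>
     (\<forall>X \<in> carrier_mat d d. mtrace (\<Phi> X) = mtrace X) \<and>
     (\<forall>n. \<forall>M \<in> carrier_mat (n * d) (n * d). psd M \<longrightarrow> psd (ampl n d \<Phi> M))"

definition weight_athermality :: "nat \<Rightarrow> complex mat \<Rightarrow> complex mat \<Rightarrow> real" where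
  "weight_athermality d \<gamma> \<rho> =
     Inf {a. a \<ge> 0 \<and> (\<exists>\<tau>. density d \<tau> \<and>
             \<rho> = complex_of_real (1 - a) \<cdot>\<^sub>m \<gamma> + complex_of_real a \<cdot>\<^sub>m \<tau>)}"

definition epm_avg ::
  "(complex mat \<Rightarrow> complex mat) \<Rightarrow> complex mat \<Rightarrow>
   nat \<Rightarrow> (nat \<Rightarrow> real) \<Rightarrow> (nat \<Rightarrow> complex mat) \<Rightarrow>
   nat \<Rightarrow> (nat \<Rightarrow> real) \<Rightarrow> (nat \<Rightarrow> complex mat) \<Rightarrow> (real \<Rightarrow> complex) \<Rightarrow> complex" where
  "epm_avg \<Phi> \<rho> mi Ei Pri mf Ef Prf g =
     (\<Sum>l<mi. \<Sum>k<mf. mtrace (\<rho> * Pri l) * mtrace (\<Phi> \<rho> * Prf k) * g (Ef k - Ei l))"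

end

theory Submission
  imports Defs
begin

text \<open>
  Since \<Delta>F = -ln(Z_f/Z_i)/\<beta>, the weight of the path (l,k) splits as
  exp(-\<beta>(E^f_k - E^i_l - \<Delta>F)) = (Z_i exp(\<beta> E^i_l)) (exp(-\<beta> E^f_k)/Z_f), the l-th spectral
  coefficient of \<gamma>_i^-1 times the k-th spectral coefficient of \<gamma>_f. Hence the EPM average
  factorises as Tr(\<rho> \<gamma>_i^-1) Tr(\<Phi>[\<rho>] \<gamma>_f). Inserting \<rho> = (1-a)\<gamma>_i + a\<tau> into both traces,
  and using Tr(\<gamma>_i \<gamma>_i^-1) = d and the linearity of \<Phi>, gives the formula.
\<close>

lemma index_mult_mat_sum:
  assumes "A \<in> carrier_mat nr n" "B \<in> carrier_mat n nc" "i < nr" "j < nc"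
  shows "(A * B) $$ (i, j) = (\<Sum>k<n. A $$ (i, k) * B $$ (k, j))"
  using assms by (auto simp: scalar_prod_def lessThan_atLeast0 intro!: sum.cong)

lemma mtrace_add:
  "A \<in> carrier_mat n n \<Longrightarrow> B \<in> carrier_mat n n \<Longrightarrow> mtrace (A + B) = mtrace A + mtrace B"
  unfolding mtrace_def by (auto simp: sum.distrib)

lemma mtrace_smult: "A \<in> carrier_mat n n \<Longrightarrow> mtrace (c \<cdot>\<^sub>m A) = c * mtrace A"
  unfolding mtrace_def by (simp add: sum_distrib_left carrier_matD)

lemma mtrace_one_mat: "mtrace (1\<^sub>m n) = of_nat n"
  unfolding mtrace_def by simp

lemma mtrace_mult_comm:
  assumes "A \<in> carrier_mat n m" "B \<in> carrier_mat m n"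
  shows "mtrace (A * B) = mtrace (B * A)"
proof -
  have "mtrace (A * B) = (\<Sum>i<n. \<Sum>k<m. A $$ (i, k) * B $$ (k, i))"
    unfolding mtrace_def using assms
    by (auto simp: index_mult_mat_sum simp del: index_mult_mat(1) intro!: sum.cong)
  also have "\<dots> = (\<Sum>k<m. \<Sum>i<n. B $$ (k, i) * A $$ (i, k))"
    by (subst sum.swap) (simp add: mult.commute)
  also have "\<dots> = mtrace (B * A)"
    unfolding mtrace_def using assms
    by (auto simp: index_mult_mat_sum simp del: index_mult_mat(1) intro!: sum.cong)
  finally show ?thesis .
qed

lemma mtrace_lincomb_mult:
  assumes "A \<in> carrier_mat n n" "B \<in> carrier_mat n n" "M \<in> carrier_mat n n"
  shows "mtrace ((x \<cdot>\<^sub>m A + y \<cdot>\<^sub>m B) * M) = x * mtrace (A * M) + y * mtrace (B * M)"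
  using assms by (simp add: add_mult_distrib_mat[of _ n n] mult_smult_assoc_mat[of _ n n _ n]
      mtrace_add[of _ n] mtrace_smult[of _ n])

lemma mtrace_lincomb_mult_right_inverse:
  assumes "A \<in> carrier_mat n n" "B \<in> carrier_mat n n" "M \<in> carrier_mat n n" "A * M = 1\<^sub>m n"
  shows "mtrace ((x \<cdot>\<^sub>m A + y \<cdot>\<^sub>m B) * M) = x * of_nat n + y * mtrace (M * B)"
  using assms by (simp add: mtrace_lincomb_mult mtrace_one_mat mtrace_mult_comm[of B n n M])

lemma msum_carrier [simp]: "msum d f I \<in> carrier_mat d d"
  by (simp add: msum_def)

lemma dim_msum [simp]: "dim_row (msum d f I) = d" "dim_col (msum d f I) = d"
  by (simp_all add: msum_def)

lemma index_msum: "i < d \<Longrightarrow> j < d \<Longrightarrow> msum d f I $$ (i, j) = (\<Sum>l\<in>I. f l $$ (i, j))"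
  by (simp add: msum_def)

lemma msum_cong: "(\<And>l. l \<in> I \<Longrightarrow> f l = g l) \<Longrightarrow> msum d f I = msum d g I"
  unfolding msum_def by (intro cong_mat refl) (auto intro!: sum.cong)

lemma mult_msum_right:
  assumes A: "A \<in> carrier_mat d d" and f: "\<And>l. l \<in> I \<Longrightarrow> f l \<in> carrier_mat d d"
  shows "A * msum d f I = msum d (\<lambda>l. A * f l) I"
proof (rule eq_matI)
  fix i j assume "i < dim_row (msum d (\<lambda>l. A * f l) I)" "j < dim_col (msum d (\<lambda>l. A * f l) I)"
  then have i: "i < d" and j: "j < d" by auto
  have "(A * msum d f I) $$ (i, j) = (\<Sum>k<d. A $$ (i, k) * (\<Sum>l\<in>I. f l $$ (k, j)))"
    using A i j by (simp add: index_mult_mat_sum[OF A msum_carrier] index_msum del: index_mult_mat(1))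
  also have "\<dots> = (\<Sum>l\<in>I. \<Sum>k<d. A $$ (i, k) * f l $$ (k, j))"
    by (simp add: sum_distrib_left sum.swap[of _ I])
  also have "\<dots> = msum d (\<lambda>l. A * f l) I $$ (i, j)"
    using f i j A by (simp add: index_msum index_mult_mat_sum[OF A f])
  finally show "(A * msum d f I) $$ (i, j) = msum d (\<lambda>l. A * f l) I $$ (i, j)" .
qed (use A in auto)

lemma mult_msum_left:
  assumes A: "A \<in> carrier_mat d d" and f: "\<And>l. l \<in> I \<Longrightarrow> f l \<in> carrier_mat d d"
  shows "msum d f I * A = msum d (\<lambda>l. f l * A) I"
proof (rule eq_matI)
  fix i j assume "i < dim_row (msum d (\<lambda>l. f l * A) I)" "j < dim_col (msum d (\<lambda>l. f l * A) I)"
  then have i: "i < d" and j: "j < d" by auto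
  have "(msum d f I * A) $$ (i, j) = (\<Sum>k<d. (\<Sum>l\<in>I. f l $$ (i, k)) * A $$ (k, j))"
    using A i j by (simp add: index_mult_mat_sum[OF msum_carrier A] index_msum del: index_mult_mat(1))
  also have "\<dots> = (\<Sum>l\<in>I. \<Sum>k<d. f l $$ (i, k) * A $$ (k, j))"
    by (simp add: sum_distrib_right sum.swap[of _ I])
  also have "\<dots> = msum d (\<lambda>l. f l * A) I $$ (i, j)"
    using f i j A by (simp add: index_msum index_mult_mat_sum[OF f A])
  finally show "(msum d f I * A) $$ (i, j) = msum d (\<lambda>l. f l * A) I $$ (i, j)" .
qed (use A in auto)

lemma mtrace_msum:
  assumes "\<And>l. l \<in> I \<Longrightarrow> f l \<in> carrier_mat d d"
  shows "mtrace (msum d f I) = (\<Sum>l\<in>I. mtrace (f l))"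
proof -
  have "mtrace (msum d f I) = (\<Sum>i<d. \<Sum>l\<in>I. f l $$ (i, i))"
    unfolding mtrace_def by (simp add: index_msum)
  also have "\<dots> = (\<Sum>l\<in>I. \<Sum>i<d. f l $$ (i, i))"
    by (rule sum.swap)
  also have "\<dots> = (\<Sum>l\<in>I. mtrace (f l))"
    using assms unfolding mtrace_def by (intro sum.cong) auto
  finally show ?thesis .
qed

lemma minv_eqI:
  assumes A: "A \<in> carrier_mat d d" and B: "B \<in> carrier_mat d d" "A * B = 1\<^sub>m d" "B * A = 1\<^sub>m d"
  shows "minv d A = B"
  unfolding minv_def
proof (rule the_equality)
  fix C assume C: "C \<in> carrier_mat d d \<and> A * C = 1\<^sub>m d \<and> C * A = 1\<^sub>m d"
  then have "C = C * (A * B)"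
    using B by (metis right_mult_one_mat)
  also have "\<dots> = (C * A) * B"
    using A B C by (subst assoc_mult_mat[of C d d A d B d]) auto
  finally show "C = B"
    using B C by (metis left_mult_one_mat)
qed (use B in blast)

lemma mtrace_hermitian_idempotent:
  assumes P: "P \<in> carrier_mat d d" and "hermitian P" and "P * P = P"
  shows "mtrace P = of_real (\<Sum>i<d. \<Sum>j<d. (cmod (P $$ (i, j)))\<^sup>2)"
proof -
  have conj_sym: "P $$ (j, i) = cnj (P $$ (i, j))" if "i \<in> {..<d}" "j \<in> {..<d}" for i j
  proof -
    have "P $$ (j, i) = adj P $$ (j, i)"
      using assms(2) unfolding hermitian_def by simp
    then show ?thesis
      using P that unfolding adj_def by simp
  qed
  have "mtrace P = mtrace (P * P)"
    using assms(3) by simp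
  also have "\<dots> = (\<Sum>i<d. \<Sum>j<d. P $$ (i, j) * P $$ (j, i))"
    using P unfolding mtrace_def by (simp add: index_mult_mat_sum[OF P P] del: index_mult_mat(1))
  also have "\<dots> = (\<Sum>i<d. \<Sum>j<d. of_real ((cmod (P $$ (i, j)))\<^sup>2))"
  proof (intro sum.cong refl)
    fix i j assume "i \<in> {..<d}" "j \<in> {..<d}"
    then show "P $$ (i, j) * P $$ (j, i) = of_real ((cmod (P $$ (i, j)))\<^sup>2)"
      by (simp only: conj_sym[of i j] complex_norm_square)
  qed
  finally show ?thesis
    by simp
qed

text \<open>\<open>spectral_fun d m P c\<close> is f(H) for any f with f(E l) = c l; \<open>exp_spec\<close> and
  \<open>gibbs\<close> are of this form.\<close>

definition spectral_fun :: "nat \<Rightarrow> nat \<Rightarrow> (nat \<Rightarrow> complex mat) \<Rightarrow> (nat \<Rightarrow> complex) \<Rightarrow> complex mat"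
  where "spectral_fun d m P c = msum d (\<lambda>l. c l \<cdot>\<^sub>m P l) {..<m}"

lemma spectral_fun_carrier [simp]: "spectral_fun d m P c \<in> carrier_mat d d"
  by (simp add: spectral_fun_def)

lemma smult_spectral_fun:
  assumes "\<And>l. l < m \<Longrightarrow> P l \<in> carrier_mat d d"
  shows "k \<cdot>\<^sub>m spectral_fun d m P c = spectral_fun d m P (\<lambda>l. k * c l)"
proof (rule eq_matI)
  fix i j assume "i < dim_row (spectral_fun d m P (\<lambda>l. k * c l))"
    "j < dim_col (spectral_fun d m P (\<lambda>l. k * c l))"
  then have "i < d" "j < d" by (simp_all add: spectral_fun_def)
  then show "(k \<cdot>\<^sub>m spectral_fun d m P c) $$ (i, j) = spectral_fun d m P (\<lambda>l. k * c l) $$ (i, j)"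
    using assms[THEN carrier_matD(1)] assms[THEN carrier_matD(2)]
    by (auto simp: spectral_fun_def index_msum sum_distrib_left intro!: sum.cong)
qed (simp_all add: spectral_fun_def)

context
  fixes d m H E P
  assumes spec: "spectral_decomp d H m E P"
begin

lemma spectral_proj_carrier: "l < m \<Longrightarrow> P l \<in> carrier_mat d d"
  using spec unfolding spectral_decomp_def by auto

lemma spectral_fun_mult_proj:
  assumes j: "j < m"
  shows "spectral_fun d m P c * P j = c j \<cdot>\<^sub>m P j"
proof -
  have "spectral_fun d m P c * P j = msum d (\<lambda>l. if l = j then c j \<cdot>\<^sub>m P j else 0\<^sub>m d d) {..<m}"
    unfolding spectral_fun_def
  proof (subst mult_msum_left; (intro msum_cong)?)
    fix l assume l: "l \<in> {..<m}"
    have "c l \<cdot>\<^sub>m P l * P j = c l \<cdot>\<^sub>m (P l * P j)"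
      using l j by (intro mult_smult_assoc_mat[of _ d d _ d] spectral_proj_carrier) auto
    moreover have "P l * P j = (if l = j then P j else 0\<^sub>m d d)"
      using spec l j unfolding spectral_decomp_def by auto
    ultimately show "c l \<cdot>\<^sub>m P l * P j = (if l = j then c j \<cdot>\<^sub>m P j else 0\<^sub>m d d)"
      by auto
  qed (use j spectral_proj_carrier in auto)
  also have "\<dots> = c j \<cdot>\<^sub>m P j"
    using j spectral_proj_carrier[OF j]
    by (intro eq_matI) (auto simp: index_msum if_distrib[of "\<lambda>X. X $$ _"] cong: if_cong)
  finally show ?thesis .
qed

lemma spectral_fun_mult:
  "spectral_fun d m P c * spectral_fun d m P c' = spectral_fun d m P (\<lambda>l. c l * c' l)"
proof -
  have "spectral_fun d m P c * spectral_fun d m P c'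
      = msum d (\<lambda>l. c' l \<cdot>\<^sub>m (spectral_fun d m P c * P l)) {..<m}"
    unfolding spectral_fun_def[of d m P c'] using spectral_proj_carrier
    by (subst mult_msum_right) (auto intro!: msum_cong mult_smult_distrib[of _ d d _ d])
  also have "\<dots> = spectral_fun d m P (\<lambda>l. c l * c' l)"
    unfolding spectral_fun_def[of d m P "\<lambda>l. c l * c' l"]
    using spectral_proj_carrier[THEN carrier_matD(1)] spectral_proj_carrier[THEN carrier_matD(2)]
    by (intro msum_cong) (auto simp: spectral_fun_mult_proj intro!: eq_matI)
  finally show ?thesis .
qed

lemma spectral_fun_one: "spectral_fun d m P (\<lambda>_. 1) = 1\<^sub>m d"
proof -
  have "spectral_fun d m P (\<lambda>_. 1) = msum d P {..<m}"
    unfolding spectral_fun_def using spectral_proj_carrier by (intro msum_cong) auto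
  then show ?thesis
    using spec unfolding spectral_decomp_def by simp
qed

lemma mtrace_mult_spectral_fun:
  assumes X: "X \<in> carrier_mat d d"
  shows "mtrace (X * spectral_fun d m P c) = (\<Sum>l<m. c l * mtrace (X * P l))"
proof -
  have "mtrace (X * spectral_fun d m P c) = mtrace (msum d (\<lambda>l. X * (c l \<cdot>\<^sub>m P l)) {..<m})"
    unfolding spectral_fun_def using X spectral_proj_carrier by (subst mult_msum_right) auto
  also have "\<dots> = (\<Sum>l<m. mtrace (X * (c l \<cdot>\<^sub>m P l)))"
    using X spectral_proj_carrier by (intro mtrace_msum mult_carrier_mat[of _ d d]) auto
  also have "\<dots> = (\<Sum>l<m. c l * mtrace (X * P l))"
  proof (intro sum.cong refl)
    fix l assume "l \<in> {..<m}"
    then have Pl: "P l \<in> carrier_mat d d"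
      by (simp add: spectral_proj_carrier)
    then show "mtrace (X * (c l \<cdot>\<^sub>m P l)) = c l * mtrace (X * P l)"
      using X by (simp add: mult_smult_distrib[OF X Pl] mtrace_smult[of _ d])
  qed
  finally show ?thesis .
qed

lemma spectral_fun_cong:
  "(\<And>l. l < m \<Longrightarrow> c l = c' l) \<Longrightarrow> spectral_fun d m P c = spectral_fun d m P c'"
  unfolding spectral_fun_def by (auto intro!: msum_cong)

lemma mtrace_spectral_fun: "mtrace (spectral_fun d m P c) = (\<Sum>l<m. c l * mtrace (P l))"
proof -
  have "mtrace (spectral_fun d m P c) = (\<Sum>l<m. mtrace (c l \<cdot>\<^sub>m P l))"
    unfolding spectral_fun_def using spectral_proj_carrier by (intro mtrace_msum) auto
  also have "\<dots> = (\<Sum>l<m. c l * mtrace (P l))"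
    using spectral_proj_carrier by (intro sum.cong refl) (meson lessThan_iff mtrace_smult)
  finally show ?thesis .
qed

lemma sum_mtrace_spectral_proj: "(\<Sum>l<m. mtrace (P l)) = of_nat d"
  using mtrace_spectral_fun[of "\<lambda>_. 1"] by (simp add: spectral_fun_one mtrace_one_mat)

lemma partition_fn_real_pos:
  assumes "d > 0"
  shows "\<exists>Z>0. partition_fn d \<beta> m E P = complex_of_real Z"
proof -
  define r where "r l = (\<Sum>i<d. \<Sum>j<d. (cmod (P l $$ (i, j)))\<^sup>2)" for l
  have mtrace_P: "mtrace (P l) = of_real (r l)" if "l < m" for l
    unfolding r_def using spec that unfolding spectral_decomp_def
    by (intro mtrace_hermitian_idempotent) auto
  have r_nonneg: "r l \<ge> 0" for l
    unfolding r_def by (intro sum_nonneg) auto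
  have "complex_of_real (\<Sum>l<m. r l) = of_nat d"
    using sum_mtrace_spectral_proj mtrace_P by simp
  then have "(\<Sum>l<m. r l) = real d"
    by (metis of_real_eq_iff of_real_of_nat_eq)
  with \<open>d > 0\<close> obtain l0 where l0: "l0 < m" "r l0 > 0"
    by (metis lessThan_iff not_less of_nat_0_less_iff sum_nonpos)
  have "partition_fn d \<beta> m E P = mtrace (spectral_fun d m P (\<lambda>l. exp (- \<beta> * E l)))"
    unfolding partition_fn_def exp_spec_def spectral_fun_def ..
  also have "\<dots> = (\<Sum>l<m. complex_of_real (exp (- \<beta> * E l) * r l))"
    unfolding mtrace_spectral_fun using mtrace_P by (intro sum.cong) auto
  finally have "partition_fn d \<beta> m E P = complex_of_real (\<Sum>l<m. exp (- \<beta> * E l) * r l)"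
    by simp
  moreover have "(\<Sum>l<m. exp (- \<beta> * E l) * r l) > 0"
    using l0 r_nonneg by (intro sum_pos2[of _ l0]) auto
  ultimately show ?thesis
    by blast
qed

lemma minv_spectral_fun:
  assumes "\<And>l. l < m \<Longrightarrow> c l \<noteq> 0"
  shows "minv d (spectral_fun d m P c) = spectral_fun d m P (\<lambda>l. 1 / c l)"
    and "spectral_fun d m P c * minv d (spectral_fun d m P c) = 1\<^sub>m d"
proof -
  have "spectral_fun d m P c * spectral_fun d m P (\<lambda>l. 1 / c l) = 1\<^sub>m d"
    and "spectral_fun d m P (\<lambda>l. 1 / c l) * spectral_fun d m P c = 1\<^sub>m d"
    using assms by (simp_all add: spectral_fun_mult spectral_fun_one[symmetric] cong: spectral_fun_cong)
  then show inv: "minv d (spectral_fun d m P c) = spectral_fun d m P (\<lambda>l. 1 / c l)"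
    by (intro minv_eqI) simp_all
  with \<open>spectral_fun d m P c * _ = 1\<^sub>m d\<close>
  show "spectral_fun d m P c * minv d (spectral_fun d m P c) = 1\<^sub>m d"
    by simp
qed

lemma gibbs_eq_spectral_fun:
  assumes "partition_fn d \<beta> m E P = complex_of_real Z"
  shows "gibbs d \<beta> m E P = spectral_fun d m P (\<lambda>l. complex_of_real (exp (- \<beta> * E l) / Z))"
  unfolding gibbs_def assms exp_spec_def spectral_fun_def[symmetric]
  using spectral_proj_carrier by (simp add: smult_spectral_fun)

lemma minv_gibbs:
  assumes "partition_fn d \<beta> m E P = complex_of_real Z" and "Z > 0"
  shows "minv d (gibbs d \<beta> m E P) = spectral_fun d m P (\<lambda>l. complex_of_real (Z * exp (\<beta> * E l)))"
    and "gibbs d \<beta> m E P * minv d (gibbs d \<beta> m E P) = 1\<^sub>m d"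
proof -
  have "1 / complex_of_real (exp (- \<beta> * E l) / Z) = complex_of_real (Z * exp (\<beta> * E l))" for l
  proof -
    have "1 / (exp (- \<beta> * E l) / Z) = Z * exp (\<beta> * E l)"
      by (simp add: exp_minus divide_inverse)
    then show ?thesis
      by (metis of_real_1 of_real_divide)
  qed
  then show "minv d (gibbs d \<beta> m E P) = spectral_fun d m P (\<lambda>l. complex_of_real (Z * exp (\<beta> * E l)))"
    using assms by (simp add: gibbs_eq_spectral_fun minv_spectral_fun(1) del: of_real_divide)
  show "gibbs d \<beta> m E P * minv d (gibbs d \<beta> m E P) = 1\<^sub>m d"
    using assms by (simp add: gibbs_eq_spectral_fun minv_spectral_fun(2) del: of_real_divide)
qed

end

lemma exp_free_energy_split:
  fixes \<beta> Zi Zf ei ef :: real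
  assumes "\<beta> \<noteq> 0" and "Zi > 0" and "Zf > 0"
  shows "exp (- \<beta> * ((ef - ei) - - (1 / \<beta>) * ln (Zf / Zi)))
       = (Zi * exp (\<beta> * ei)) * (exp (- \<beta> * ef) / Zf)"
proof -
  have "- \<beta> * ((ef - ei) - - (1 / \<beta>) * ln (Zf / Zi)) = \<beta> * ei + - \<beta> * ef - ln (Zf / Zi)"
    using assms(1) by (simp add: algebra_simps)
  then show ?thesis
    using assms(2,3) by (simp add: exp_add exp_diff exp_minus field_simps)
qed

lemma epm_avg_exp_factorizes:
  assumes Si: "spectral_decomp d Hi mi Ei Pri" and Sf: "spectral_decomp d Hf mf Ef Prf"
    and \<rho>: "\<rho> \<in> carrier_mat d d" and \<Phi>\<rho>: "\<Phi> \<rho> \<in> carrier_mat d d" and "\<beta> \<noteq> 0"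
    and Zi: "partition_fn d \<beta> mi Ei Pri = complex_of_real Zi" "Zi > 0"
    and Zf: "partition_fn d \<beta> mf Ef Prf = complex_of_real Zf" "Zf > 0"
  shows "epm_avg \<Phi> \<rho> mi Ei Pri mf Ef Prf
           (\<lambda>\<Delta>E. complex_of_real (exp (- \<beta> * (\<Delta>E - - (1 / \<beta>) * ln (Zf / Zi)))))
         = mtrace (\<rho> * minv d (gibbs d \<beta> mi Ei Pri)) * mtrace (\<Phi> \<rho> * gibbs d \<beta> mf Ef Prf)"
proof -
  have "epm_avg \<Phi> \<rho> mi Ei Pri mf Ef Prf
          (\<lambda>\<Delta>E. complex_of_real (exp (- \<beta> * (\<Delta>E - - (1 / \<beta>) * ln (Zf / Zi)))))
      = (\<Sum>l<mi. \<Sum>k<mf. (complex_of_real (Zi * exp (\<beta> * Ei l)) * mtrace (\<rho> * Pri l))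
            * (complex_of_real (exp (- \<beta> * Ef k) / Zf) * mtrace (\<Phi> \<rho> * Prf k)))"
    unfolding epm_avg_def exp_free_energy_split[OF \<open>\<beta> \<noteq> 0\<close> Zi(2) Zf(2)]
    by (simp only: of_real_mult mult_ac)
  also have "\<dots> = (\<Sum>l<mi. complex_of_real (Zi * exp (\<beta> * Ei l)) * mtrace (\<rho> * Pri l))
            * (\<Sum>k<mf. complex_of_real (exp (- \<beta> * Ef k) / Zf) * mtrace (\<Phi> \<rho> * Prf k))"
    by (simp add: sum_product)
  also have "\<dots> = mtrace (\<rho> * minv d (gibbs d \<beta> mi Ei Pri)) * mtrace (\<Phi> \<rho> * gibbs d \<beta> mf Ef Prf)"
    by (simp add: minv_gibbs(1)[OF Si Zi] gibbs_eq_spectral_fun[OF Sf Zf(1)]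
        mtrace_mult_spectral_fun[OF Si \<rho>] mtrace_mult_spectral_fun[OF Sf \<Phi>\<rho>] del: of_real_divide)
  finally show ?thesis .
qed

lemma cptp_carrier: "cptp d \<Phi> \<Longrightarrow> X \<in> carrier_mat d d \<Longrightarrow> \<Phi> X \<in> carrier_mat d d"
  unfolding cptp_def by blast

lemma cptp_lincomb:
  assumes "cptp d \<Phi>" and "A \<in> carrier_mat d d" and "B \<in> carrier_mat d d"
  shows "\<Phi> (x \<cdot>\<^sub>m A + y \<cdot>\<^sub>m B) = x \<cdot>\<^sub>m \<Phi> A + y \<cdot>\<^sub>m \<Phi> B"
  using assms unfolding cptp_def by simp

lemma mtrace_cptp_lincomb_mult:
  assumes "cptp d \<Phi>" and "A \<in> carrier_mat d d" "B \<in> carrier_mat d d" "G \<in> carrier_mat d d"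
  shows "mtrace (\<Phi> (x \<cdot>\<^sub>m A + y \<cdot>\<^sub>m B) * G) = x * mtrace (G * \<Phi> A) + y * mtrace (G * \<Phi> B)"
proof -
  have \<Phi>A: "\<Phi> A \<in> carrier_mat d d" and \<Phi>B: "\<Phi> B \<in> carrier_mat d d"
    using assms(1-3) by (simp_all add: cptp_carrier)
  then show ?thesis
    using assms by (simp add: cptp_lincomb mtrace_lincomb_mult
        mtrace_mult_comm[OF \<Phi>A assms(4)] mtrace_mult_comm[OF \<Phi>B assms(4)])
qed

lemma gibbs_carrier [simp]: "gibbs d \<beta> m E P \<in> carrier_mat d d"
  by (simp add: gibbs_def exp_spec_def)

theorem mainTheorem2:
  fixes d mi mf :: nat and Hi Hf \<rho> \<tau> :: "complex mat"
    and Ei Ef :: "nat \<Rightarrow> real" and Pri Prf :: "nat \<Rightarrow> complex mat"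
    and \<Phi> :: "complex mat \<Rightarrow> complex mat" and \<beta> a :: real
  assumes "d > 0"
    and "spectral_decomp d Hi mi Ei Pri"
    and "spectral_decomp d Hf mf Ef Prf"
    and "cptp d \<Phi>"
    and "\<beta> > 0"
    and "density d \<rho>"
    and "a = weight_athermality d (gibbs d \<beta> mi Ei Pri) \<rho>"
    and "density d \<tau>"
    and "\<rho> = complex_of_real (1 - a) \<cdot>\<^sub>m gibbs d \<beta> mi Ei Pri + complex_of_real a \<cdot>\<^sub>m \<tau>"
  shows "(let Zi = Re (partition_fn d \<beta> mi Ei Pri); Zf = Re (partition_fn d \<beta> mf Ef Prf);
              \<Delta>F = - (1 / \<beta>) * ln (Zf / Zi);
              \<gamma>i = gibbs d \<beta> mi Ei Pri; \<gamma>f = gibbs d \<beta> mf Ef Prf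
          in epm_avg \<Phi> \<rho> mi Ei Pri mf Ef Prf (\<lambda>\<Delta>E. complex_of_real (exp (- \<beta> * (\<Delta>E - \<Delta>F))))
             = (complex_of_real ((1 - a) * real d) + complex_of_real a * mtrace (minv d \<gamma>i * \<tau>))
               * (complex_of_real (1 - a) * mtrace (\<gamma>f * \<Phi> \<gamma>i)
                  + complex_of_real a * mtrace (\<gamma>f * \<Phi> \<tau>)))"
proof -
  note Si = assms(2) and Sf = assms(3) and \<Phi> = assms(4)
  obtain Zi where Zi: "partition_fn d \<beta> mi Ei Pri = complex_of_real Zi" "Zi > 0"
    using partition_fn_real_pos[OF Si \<open>d > 0\<close>] by blast
  obtain Zf where Zf: "partition_fn d \<beta> mf Ef Prf = complex_of_real Zf" "Zf > 0"
    using partition_fn_real_pos[OF Sf \<open>d > 0\<close>] by blast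
  have \<tau>: "\<tau> \<in> carrier_mat d d" and \<rho>: "\<rho> \<in> carrier_mat d d"
    using \<open>density d \<tau>\<close> \<open>density d \<rho>\<close> unfolding density_def by simp_all
  have "minv d (gibbs d \<beta> mi Ei Pri) \<in> carrier_mat d d"
    by (simp add: minv_gibbs(1)[OF Si Zi])
  then have "mtrace (\<rho> * minv d (gibbs d \<beta> mi Ei Pri))
      = of_real (1 - a) * of_nat d + of_real a * mtrace (minv d (gibbs d \<beta> mi Ei Pri) * \<tau>)"
    unfolding assms(9) using \<tau> minv_gibbs(2)[OF Si Zi] by (simp add: mtrace_lincomb_mult_right_inverse)
  moreover have "mtrace (\<Phi> \<rho> * gibbs d \<beta> mf Ef Prf)
      = of_real (1 - a) * mtrace (gibbs d \<beta> mf Ef Prf * \<Phi> (gibbs d \<beta> mi Ei Pri))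
        + of_real a * mtrace (gibbs d \<beta> mf Ef Prf * \<Phi> \<tau>)"
    unfolding assms(9) using \<Phi> \<tau> by (simp add: mtrace_cptp_lincomb_mult)
  ultimately show ?thesis
    using epm_avg_exp_factorizes[where \<Phi> = \<Phi>, OF Si Sf \<rho> cptp_carrier[OF \<Phi> \<rho>] _ Zi Zf]
      \<open>\<beta> > 0\<close> Zi Zf
    unfolding Let_def by simp
qed

end
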